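(* Let $\mathbf{X},\mathbf{Y}$ be Banach spaces, $\mathcal{S}\subset\mathbf{X}$, $\mathcal{S}'\subset\mathbf{Y}$. Assume $\Phi:\mathcal{S}\to\mathbf{Y}$ is Lipschitz continuous and $\Phi(\mathcal{S})\supset\mathcal{S}'$. Then $s^\ast_{\mathbf{Y}}(\mathcal{S}')\ge s^\ast_{\mathbf{X}}(\mathcal{S})$.
   Context: For a real Banach space $\mathbf{X}$ and $\mathcal{S}\subset\mathbf{X}$: a codec is a sequence $((E_R,D_R))_{R\in\mathbb{N}}$ of maps $E_R:\mathcal{S}\to\{0,1\}^R$, $D_R:\{0,1\}^R\to\mathbf{X}$; distortion $\delta_{\mathcal{S},\mathbf{X}}(E_R,D_R)=\sup_{\mathbf{x}\in\mathcal{S}}\|\mathbf{x}-D_R(E_R(\mathbf{x}))\|_{\mathbf{X}}$; optimal compression rate $s^\ast_{\mathbf{X}}(\mathcal{S})=\sup\{s\ge0:\exists\text{ codec with }\sup_RR^s\delta_{\mathcal{S},\mathbf{X}}(E_R,D_R)<\infty\}\in[0,\infty]$. *)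

theory Defs
  imports "HOL-Analysis.Analysis"
begin

text \<open>Bit strings in {0,1}^R are boolean lists of length R.
  A codec is a pair of sequences (E R, D R), R = 1, 2, ..., with
  E R : S -> {0,1}^R and D R : {0,1}^R -> X.\<close>

definition is_codec :: "'a set \<Rightarrow> (nat \<Rightarrow> 'a \<Rightarrow> bool list) \<Rightarrow> (nat \<Rightarrow> bool list \<Rightarrow> 'a) \<Rightarrow> bool" where
  "is_codec S E D \<longleftrightarrow> (\<forall>R\<ge>1. \<forall>x\<in>S. length (E R x) = R)"

definition distortion :: "'a::real_normed_vector set \<Rightarrow> ('a \<Rightarrow> bool list) \<Rightarrow> (bool list \<Rightarrow> 'a) \<Rightarrow> ereal" where
  "distortion S E D = (SUP x\<in>S. ereal (norm (x - D (E x))))"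

definition achievable_rate :: "'a::real_normed_vector set \<Rightarrow> real \<Rightarrow> bool" where
  "achievable_rate S s \<longleftrightarrow>
     (\<exists>E D. is_codec S E D \<and>
        (SUP R\<in>{1::nat..}. ereal (real R powr s) * distortion S (E R) (D R)) < \<infinity>)"

text \<open>Optimal compression rate, a value in [0, infinity] (sup of the empty set taken as 0).\<close>
definition optimal_rate :: "'a::real_normed_vector set \<Rightarrow> ereal" where
  "optimal_rate S = Sup ({0} \<union> ereal ` {s. s \<ge> 0 \<and> achievable_rate S s})"

end

theory Submission
  imports Defs
begin

text \<open>Encode a point y of S' by encoding a preimage x in S; decode a code word by choosing
  any x' in S with that code word and applying \<Phi>. Both x and x' lie within the distortion
  \<delta> of the same decoded point, so their distance is at most 2\<delta>, and the distortion of the new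
  codec on S' is at most 2L\<delta> at every bit budget R.\<close>

lemma distortion_le_iff:
  "distortion S E D \<le> ereal c \<longleftrightarrow> (\<forall>x\<in>S. norm (x - D (E x)) \<le> c)"
  unfolding distortion_def by (simp add: SUP_le_iff)

lemma achievable_rate_iff:
  "achievable_rate S s \<longleftrightarrow>
     (\<exists>E D C. is_codec S E D \<and> (\<forall>R\<ge>1. \<forall>x\<in>S. norm (x - D R (E R x)) \<le> C / real R powr s))"
proof -
  have scaled_le_iff: "ereal (real R powr s) * distortion S (E R) (D R) \<le> ereal C \<longleftrightarrow>
      (\<forall>x\<in>S. norm (x - D R (E R x)) \<le> C / real R powr s)" if "R \<ge> 1" for E D R C
  proof -
    have pos: "real R powr s > 0" using that by simp
    have "ereal (real R powr s) * distortion S (E R) (D R) \<le> ereal C \<longleftrightarrow>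
        distortion S (E R) (D R) \<le> ereal (C / real R powr s)"
      using pos by (cases "distortion S (E R) (D R)") (auto simp: field_simps)
    then show ?thesis by (simp add: distortion_le_iff)
  qed
  have "(SUP R\<in>{1::nat..}. ereal (real R powr s) * distortion S (E R) (D R)) < \<infinity> \<longleftrightarrow>
      (\<exists>C. \<forall>R\<ge>1. \<forall>x\<in>S. norm (x - D R (E R x)) \<le> C / real R powr s)" for E D
  proof -
    have "(SUP R\<in>{1::nat..}. ereal (real R powr s) * distortion S (E R) (D R)) < \<infinity> \<longleftrightarrow>
        (\<exists>C. (SUP R\<in>{1::nat..}. ereal (real R powr s) * distortion S (E R) (D R)) \<le> ereal C)"
      by (cases "SUP R\<in>{1::nat..}. ereal (real R powr s) * distortion S (E R) (D R)") auto
    also have "\<dots> \<longleftrightarrow> (\<exists>C. \<forall>R\<ge>1. \<forall>x\<in>S. norm (x - D R (E R x)) \<le> C / real R powr s)"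
      by (auto simp: SUP_le_iff scaled_le_iff)
    finally show ?thesis .
  qed
  then show ?thesis unfolding achievable_rate_def by blast
qed

lemma norm_diff_le_if_same_code:
  fixes D :: "'c \<Rightarrow> 'a::real_normed_vector"
  assumes "norm (x - D (E x)) \<le> \<epsilon>" and "norm (x' - D (E x')) \<le> \<epsilon>" and "E x = E x'"
  shows "norm (x - x') \<le> 2 * \<epsilon>"
  using assms norm_triangle_ineq4[of "x - D (E x)" "x' - D (E x)"] by simp

lemma achievable_rate_lipschitz_image:
  fixes \<Phi> :: "'a::real_normed_vector \<Rightarrow> 'b::real_normed_vector"
  assumes lip: "L-lipschitz_on S \<Phi>" and cover: "S' \<subseteq> \<Phi> ` S" and "achievable_rate S s"
  shows "achievable_rate S' s"
proof -
  obtain E D C where codec: "is_codec S E D"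
    and err: "\<And>R x. R \<ge> 1 \<Longrightarrow> x \<in> S \<Longrightarrow> norm (x - D R (E R x)) \<le> C / real R powr s"
    using \<open>achievable_rate S s\<close> unfolding achievable_rate_iff by blast
  define E' where "E' R y = E R (inv_into S \<Phi> y)" for R y
  define D' where "D' R b = \<Phi> (inv_into S (E R) b)" for R b
  have preimage: "inv_into S \<Phi> y \<in> S" "\<Phi> (inv_into S \<Phi> y) = y" if "y \<in> S'" for y
    using subsetD[OF cover that] by (simp_all add: inv_into_into f_inv_into_f)
  have "is_codec S' E' D'"
    using codec preimage unfolding is_codec_def E'_def by auto
  moreover have "norm (y - D' R (E' R y)) \<le> (2 * L * C) / real R powr s"
    if R: "R \<ge> 1" and y: "y \<in> S'" for R y
  proof -
    define x where "x = inv_into S \<Phi> y"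
    define x' where "x' = inv_into S (E R) (E R x)"
    have x: "x \<in> S" "\<Phi> x = y" using preimage[OF y] by (simp_all add: x_def)
    have x': "x' \<in> S" "E R x' = E R x"
      unfolding x'_def using x(1) by (simp_all add: inv_into_into f_inv_into_f)
    have "norm (x - x') \<le> 2 * (C / real R powr s)"
      using err[OF R x(1)] err[OF R x'(1)] x'(2) by (intro norm_diff_le_if_same_code) auto
    moreover have "norm (y - D' R (E' R y)) \<le> L * norm (x - x')"
      using lipschitz_onD[OF lip x(1) x'(1)] x
      by (simp add: D'_def E'_def x_def x'_def dist_norm)
    ultimately have "norm (y - D' R (E' R y)) \<le> L * (2 * (C / real R powr s))"
      using lipschitz_on_nonneg[OF lip] by (meson mult_left_mono order_trans)
    then show ?thesis by (simp add: ac_simps)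
  qed
  ultimately show ?thesis unfolding achievable_rate_iff by blast
qed

theorem lemmaA2:
  fixes S :: "'a::banach set" and S' :: "'b::banach set" and \<Phi> :: "'a \<Rightarrow> 'b"
  assumes "\<exists>L. L-lipschitz_on S \<Phi>"
    and "S' \<subseteq> \<Phi> ` S"
  shows "optimal_rate S' \<ge> optimal_rate S"
proof -
  obtain L where "L-lipschitz_on S \<Phi>" using assms(1) by blast
  then have "{s. s \<ge> 0 \<and> achievable_rate S s} \<subseteq> {s. s \<ge> 0 \<and> achievable_rate S' s}"
    using achievable_rate_lipschitz_image assms(2) by blast
  then show ?thesis unfolding optimal_rate_def by (intro Sup_subset_mono) blast
qed

end
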